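(* Assume (HN.1), (HN.2), (HO), (HI). Then for $i\in\{0,1\}$, $$\lim_{n\to\infty}\frac1{\pi^n}\sum_{k\in\mathbb T_{n-1}}\delta_{2k+i}\varepsilon_{2k+i}=0\quad\text{a.s.}$$
   Context: Tree notation: individuals labelled by $\mathbb{T}=\mathbb{N}^*$, $k$ has daughters $2k$ (type 0) and $2k+1$ (type 1); $\mathbb{G}_n=\{2^n,\dots,2^{n+1}-1\}$, $\mathbb{T}_n=\bigcup_{\ell=0}^n\mathbb{G}_\ell$, $\mathbb{T}^0=\mathbb{T}\cap 2\mathbb{N}$, $\mathbb{T}^1=\mathbb{T}\cap(2\mathbb{N}+1)$, $\mathbb T_n^i=\mathbb T_n\cap\mathbb T^i$. BAR process: $\mathbb E[X_1^8]<\infty$ and for $k\ge1$, $X_{2k}=a+bX_k+\varepsilon_{2k}$, $X_{2k+1}=c+dX_k+\varepsilon_{2k+1}$, $(a,b,c,d)\in\mathbb R^4$, $0<\max(|b|,|d|)<1$; $\mathcal F_n=\sigma(X_k,k\in\mathbb T_n)$. (HN.1): for all $n\ge0$, $k\in\mathbb G_{n+1}$, $\varepsilon_k\in L^8$ and a.s. $\mathbb E[\varepsilon_k|\mathcal F_n]=0$, $\mathbb E[\varepsilon_k^2|\mathcal F_n]=\sigma^2$, $\mathbb E[\varepsilon_k^4|\mathcal F_n]=\tau^4$, $\mathbb E[\varepsilon_k^8|\mathcal F_n]=\kappa^8$ with $\sigma^2,\tau^4,\kappa^8\in(0,\infty)$; and for $k\in\mathbb G_n$, $\mathbb E[\varepsilon_{2k}\varepsilon_{2k+1}|\mathcal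 F_n]=\rho=\rho'\sigma^2$, $\mathbb E[\varepsilon_{2k}^2\varepsilon_{2k+1}^2|\mathcal F_n]=\nu^2\tau^4$, $\mathbb E[\varepsilon_{2k}^4\varepsilon_{2k+1}^4|\mathcal F_n]=\lambda^4\kappa^8$ with $|\rho'|,\nu^2,\lambda^4\in[0,1)$. (HN.2): for each $n\ge0$ the vectors $(\varepsilon_{2k},\varepsilon_{2k+1})$, $k\in\mathbb G_n$, are conditionally independent given $\mathcal F_n$. Observation process: $\delta_1=1$, $\delta_{2k}=\delta_k\zeta_k^0$, $\delta_{2k+1}=\delta_k\zeta_k^1$, with $\boldsymbol\zeta_k=(\zeta_k^0,\zeta_k^1)\in\{0,1\}^2$ independent, common law $p^{(0)}$ for even $k$ and $p^{(1)}$ for odd $k$; $p_{i0}=p^{(i)}(1,0)+p^{(i)}(1,1)$, $p_{i1}=p^{(i)}(0,1)+p^{(i)}(1,1)$, $\boldsymbol P=(p_{ij})$. (HO): all $p_{ij}>0$ and the Perron eigenvalue $\pi$ of $\boldsymbol P$ satisfies $\pi>1$. (HI): $(\delta_k)$, $(\boldsymbol\zeta_k)$ are independent of $(X_k)$, $(\varepsilon_k)$. *)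

theory Defs
  imports "HOL-Probability.Probability"
begin

text \<open>Generations of the binary tree: G n = {2^n, ..., 2^(n+1)-1},
  T n = union of G 0 .. G n = {1, ..., 2^(n+1)-1}.\<close>
definition Gen :: "nat \<Rightarrow> nat set" where
  "Gen n = {2^n..<2^(n+1)}"

definition Tn :: "nat \<Rightarrow> nat set" where
  "Tn n = {1..<2^(n+1)}"

definition gen_sigma :: "'a measure \<Rightarrow> (nat \<Rightarrow> 'a \<Rightarrow> real) \<Rightarrow> nat set \<Rightarrow> 'a measure" where
  "gen_sigma M X I = sigma (space M) {X k -` A \<inter> space M | k A. k \<in> I \<and> A \<in> sets borel}"

definition cond_indep_given ::
  "'a measure \<Rightarrow> 'a measure \<Rightarrow> 'i set \<Rightarrow> ('i \<Rightarrow> 'a \<Rightarrow> 'b) \<Rightarrow> 'b measure \<Rightarrow> bool" where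
  "cond_indep_given M F I Y N \<longleftrightarrow>
     (\<forall>J. J \<subseteq> I \<longrightarrow> finite J \<longrightarrow> (\<forall>B. (\<forall>j\<in>J. B j \<in> sets N) \<longrightarrow>
        (AE \<omega> in M. real_cond_exp M F (indicator (\<Inter>j\<in>J. Y j -` B j \<inter> space M)) \<omega>
            = (\<Prod>j\<in>J. real_cond_exp M F (indicator (Y j -` B j \<inter> space M)) \<omega>))))"

definition eigen2 :: "(nat \<Rightarrow> nat \<Rightarrow> real) \<Rightarrow> real \<Rightarrow> bool" where
  "eigen2 P l \<longleftrightarrow> (\<exists>v0 v1. (v0, v1) \<noteq> (0, 0) \<and>
      P 0 0 * v0 + P 0 1 * v1 = l * v0 \<and> P 1 0 * v0 + P 1 1 * v1 = l * v1)"

definition perron2 :: "(nat \<Rightarrow> nat \<Rightarrow> real) \<Rightarrow> real" where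
  "perron2 P = Max {l. eigen2 P l}"

text \<open>p_{i0} = P(zeta^0 = 1), p_{i1} = P(zeta^1 = 1) under the law p^{(i)} on {0,1}^2
  (encoded as bool x bool).\<close>
definition pmat :: "(nat \<Rightarrow> (bool \<times> bool) pmf) \<Rightarrow> nat \<Rightarrow> nat \<Rightarrow> real" where
  "pmat p i j = (if j = 0 then pmf (p i) (True, False) + pmf (p i) (True, True)
                 else pmf (p i) (False, True) + pmf (p i) (True, True))"

end

theory Submission
  imports Defs "HOL-Computational_Algebra.Polynomial"
begin

(*
  The proof is a second-moment (Borel-Cantelli type) argument:

  1. Noise orthogonality: eps l is conditionally centred given the history F m, and given F m
     the sister pairs of generation m+1 are conditionally independent; hence E[eps j eps l] = 0
     whenever j and l have different mothers, while E[eps j ^ 2] = sigma^2.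
  2. By (HI) the observation indicators are independent of the noise, so the cross moments
     factorise and E[S n ^ 2] = sigma^2 * sum over k in T (n - 1) of E[delta (2k+i)].
  3. E[delta (2k+c)] = E[delta k] * p (k mod 2) c; pairing the generation sums with a positive
     Perron eigenvector of P shows that sum over k in T n of E[delta k] is O(pi^n).
  4. Hence the second moments of S n / pi^n are dominated by a geometric series, and a sequence
     with summable second moments tends to 0 almost surely.
*)

section \<open>Indexing of the binary tree\<close>

lemma Gen_Suc_iff_parent: "k \<in> Gen (Suc n) \<longleftrightarrow> k div 2 \<in> Gen n"
  unfolding Gen_def by auto

lemma Gen_ge1: "k \<in> Gen n \<Longrightarrow> k \<ge> 1"
  unfolding Gen_def using one_le_power[of "2::nat" n] by simp

lemma Gen_Suc_ge2: "k \<in> Gen (Suc n) \<Longrightarrow> k \<ge> 2"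
  using Gen_ge1[of "k div 2" n] by (simp add: Gen_Suc_iff_parent)

lemma Gen_exists: "k \<ge> 1 \<Longrightarrow> \<exists>n. k \<in> Gen n"
proof (induction k rule: less_induct)
  case (less k)
  show ?case
  proof (cases "k = 1")
    case True
    then show ?thesis by (auto simp: Gen_def intro!: exI[of _ 0])
  next
    case False
    then obtain n where "k div 2 \<in> Gen n" using less by fastforce
    then show ?thesis by (auto simp flip: Gen_Suc_iff_parent)
  qed
qed

lemma Gen_Suc_exists: "k \<ge> 2 \<Longrightarrow> \<exists>n. k \<in> Gen (Suc n)"
  using Gen_exists[of "k div 2"] by (auto simp: Gen_Suc_iff_parent)

lemma Tn_ge1: "k \<in> Tn n \<Longrightarrow> k \<ge> 1"
  unfolding Tn_def by simp

lemma finite_Tn [simp]: "finite (Tn n)"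
  unfolding Tn_def by simp

lemma daughter_in_Tn_Suc: "k \<in> Tn n \<Longrightarrow> c \<le> 1 \<Longrightarrow> 2 * k + c \<in> Tn (Suc n)"
  unfolding Tn_def by auto

lemma sum_daughter_pairs:
  fixes f :: "nat \<Rightarrow> real"
  shows "(\<Sum>k\<in>{a..<b}. f (2*k) + f (2*k+1)) = (\<Sum>j\<in>{2*a..<2*b}. f j)"
proof (induction b)
  case (Suc b)
  show ?case
  proof (cases "a \<le> b")
    case True
    then have "{2*a..<2*Suc b} = insert (2*b+1) (insert (2*b) {2*a..<2*b})" by auto
    then show ?thesis using Suc True by simp
  qed simp
qed simp

lemma sum_Gen_Suc:
  fixes f :: "nat \<Rightarrow> real"
  shows "(\<Sum>j\<in>Gen (Suc n). f j) = (\<Sum>k\<in>Gen n. f (2*k) + f (2*k+1))"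
  unfolding Gen_def using sum_daughter_pairs[of f "2^n" "2^(n+1)"] by simp

lemma sum_Tn_Gen:
  fixes f :: "nat \<Rightarrow> real"
  shows "(\<Sum>k\<in>Tn n. f k) = (\<Sum>m\<le>n. \<Sum>k\<in>Gen m. f k)"
proof (induction n)
  case 0
  then show ?case by (simp add: Tn_def Gen_def)
next
  case (Suc n)
  have "Tn (Suc n) = Tn n \<union> Gen (Suc n)" "Tn n \<inter> Gen (Suc n) = {}"
    unfolding Tn_def Gen_def by auto
  then have "(\<Sum>k\<in>Tn (Suc n). f k) = (\<Sum>k\<in>Tn n. f k) + (\<Sum>k\<in>Gen (Suc n). f k)"
    by (simp add: sum.union_disjoint Gen_def)
  then show ?case using Suc by simp
qed

lemma gen_sigma_space [simp]: "space (gen_sigma M X I) = space M"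
  unfolding gen_sigma_def by (simp add: space_measure_of_conv)

lemma sets_gen_sigma:
  "sets (gen_sigma M X I) = sigma_sets (space M) {X k -` A \<inter> space M | k A. k \<in> I \<and> A \<in> sets borel}"
  unfolding gen_sigma_def by (rule sets_measure_of) auto

lemma gen_sigma_measurable: "k \<in> I \<Longrightarrow> X k \<in> borel_measurable (gen_sigma M X I)"
  by (rule measurableI) (auto simp: sets_gen_sigma intro!: sigma_sets.Basic)

lemma (in prob_space) gen_sigma_subalgebra:
  assumes "\<And>k. k \<in> I \<Longrightarrow> X k \<in> borel_measurable M"
  shows "sigma_finite_subalgebra M (gen_sigma M X I)"
proof -
  have "subalgebra M (gen_sigma M X I)"
    unfolding subalgebra_def sets_gen_sigma
    by (auto intro!: sets.sigma_sets_subset measurable_sets assms)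
  then have "finite_measure_subalgebra M (gen_sigma M X I)"
    by unfold_locales
  then show ?thesis by (rule finite_measure_subalgebra_is_sigma_finite)
qed

section \<open>General probabilistic tools\<close>

lemma (in prob_space) indep_vimage_integral:
  fixes f g :: "_ \<Rightarrow> real"
  assumes ind: "indep_set (sets (vimage_algebra (space M) Phi N1)) (sets (vimage_algebra (space M) Psi N2))"
    and f: "f \<in> borel_measurable (vimage_algebra (space M) Phi N1)"
    and g: "g \<in> borel_measurable (vimage_algebra (space M) Psi N2)"
    and int_f: "integrable M f" and int_g: "integrable M g"
  shows "integrable M (\<lambda>x. f x * g x)" "(\<integral>x. f x * g x \<partial>M) = (\<integral>x. f x \<partial>M) * (\<integral>x. g x \<partial>M)"
proof -
  have "sigma_sets (space M) {f -` A \<inter> space M |A. A \<in> sets borel} \<subseteq> sets (vimage_algebra (space M) Phi N1)"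
    "sigma_sets (space M) {g -` A \<inter> space M |A. A \<in> sets borel} \<subseteq> sets (vimage_algebra (space M) Psi N2)"
    using sets.sigma_sets_subset[of "{f -` A \<inter> space M |A. A \<in> sets borel}" "vimage_algebra (space M) Phi N1"]
      sets.sigma_sets_subset[of "{g -` A \<inter> space M |A. A \<in> sets borel}" "vimage_algebra (space M) Psi N2"]
      measurable_sets[OF f] measurable_sets[OF g] by auto
  then have "indep_var borel f borel g"
    using ind int_f int_g unfolding indep_var_eq indep_sets2_eq by blast
  then show "integrable M (\<lambda>x. f x * g x)" "(\<integral>x. f x * g x \<partial>M) = (\<integral>x. f x \<partial>M) * (\<integral>x. g x \<partial>M)"
    using int_f int_g by (simp_all add: indep_var_integrable indep_var_lebesgue_integral)
qed

lemma measurable_vimage_algebra_comp: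
  assumes "Phi \<in> X \<rightarrow> space N" "h \<in> measurable N K"
  shows "(\<lambda>x. h (Phi x)) \<in> measurable (vimage_algebra X Phi N) K"
  using measurable_comp[OF measurable_vimage_algebra1 assms(2)] assms(1) by (simp add: comp_def)

text \<open>Two non-negative integrable weights U, V giving the same weighted mass to every event
  {Y \<in> B} give the same weighted integral to every function of Y: the images under Y of the
  measures with densities U and V coincide.\<close>
lemma integral_weighted_eq_if_events_eq:
  fixes U V :: "'a \<Rightarrow> real" and Y :: "'a \<Rightarrow> 'b" and f :: "'b \<Rightarrow> real"
  assumes Y[measurable]: "Y \<in> measurable M N"
    and [measurable]: "U \<in> borel_measurable M" "V \<in> borel_measurable M"
    and int_U: "integrable M U" and int_V: "integrable M V"
    and nonneg_U: "AE x in M. 0 \<le> U x" and nonneg_V: "AE x in M. 0 \<le> V x"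
    and events: "\<And>B. B \<in> sets N \<Longrightarrow> (\<integral>x. indicator B (Y x) * U x \<partial>M) = (\<integral>x. indicator B (Y x) * V x \<partial>M)"
    and f[measurable]: "f \<in> borel_measurable N"
  shows "(\<integral>x. f (Y x) * U x \<partial>M) = (\<integral>x. f (Y x) * V x \<partial>M)"
proof -
  have image_mass: "emeasure (distr (density M W) N Y) B = ennreal (\<integral>x. indicator B (Y x) * W x \<partial>M)"
    if [measurable]: "W \<in> borel_measurable M" and "integrable M W" "AE x in M. 0 \<le> W x"
      and B[measurable]: "B \<in> sets N" for W :: "'a \<Rightarrow> real" and B
  proof -
    have "emeasure (distr (density M W) N Y) B = emeasure (density M W) (Y -` B \<inter> space M)"
      by (simp add: emeasure_distr)
    also have "\<dots> = (\<integral>\<^sup>+ x. ennreal (W x) * indicator (Y -` B \<inter> space M) x \<partial>M)"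
      by (subst emeasure_density) auto
    also have "\<dots> = (\<integral>\<^sup>+ x. ennreal (indicator B (Y x) * W x) \<partial>M)"
      by (intro nn_integral_cong) (auto simp: indicator_def)
    also have "\<dots> = ennreal (\<integral>x. indicator B (Y x) * W x \<partial>M)"
    proof (rule nn_integral_eq_integral)
      show "integrable M (\<lambda>x. indicator B (Y x) * W x)"
        by (rule Bochner_Integration.integrable_bound[OF \<open>integrable M W\<close>]) (auto simp: indicator_def)
      show "AE x in M. 0 \<le> indicator B (Y x) * W x"
        using \<open>AE x in M. 0 \<le> W x\<close> by eventually_elim auto
    qed
    finally show ?thesis .
  qed
  have "distr (density M U) N Y = distr (density M V) N Y"
  proof (rule measure_eqI)
    fix B assume "B \<in> sets (distr (density M U) N Y)"
    then have "B \<in> sets N" by simp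
    then show "emeasure (distr (density M U) N Y) B = emeasure (distr (density M V) N Y) B"
      using image_mass[of U B] image_mass[of V B] events int_U int_V nonneg_U nonneg_V by simp
  qed simp
  then have "integral\<^sup>L (distr (density M U) N Y) f = integral\<^sup>L (distr (density M V) N Y) f"
    by simp
  then show ?thesis
    using nonneg_U nonneg_V by (simp add: integral_distr integral_density mult.commute)
qed

lemma cond_indep_given_pair:
  assumes ci: "cond_indep_given M F I Y N"
    and k: "k1 \<in> I" "k2 \<in> I" "k1 \<noteq> k2" and B: "B1 \<in> sets N" "B2 \<in> sets N"
  shows "AE \<omega> in M. real_cond_exp M F (indicator (Y k1 -` B1 \<inter> Y k2 -` B2 \<inter> space M)) \<omega>
    = real_cond_exp M F (indicator (Y k1 -` B1 \<inter> space M)) \<omega>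
      * real_cond_exp M F (indicator (Y k2 -` B2 \<inter> space M)) \<omega>"
proof -
  define B where "B k = (if k = k1 then B1 else B2)" for k
  have "AE \<omega> in M. real_cond_exp M F (indicator (\<Inter>k\<in>{k1, k2}. Y k -` B k \<inter> space M)) \<omega>
      = (\<Prod>k\<in>{k1, k2}. real_cond_exp M F (indicator (Y k -` B k \<inter> space M)) \<omega>)"
    using ci[unfolded cond_indep_given_def, rule_format, of "{k1, k2}" B] k B by (simp add: B_def)
  moreover have "(\<Inter>k\<in>{k1, k2}. Y k -` B k \<inter> space M) = Y k1 -` B1 \<inter> Y k2 -` B2 \<inter> space M"
    using k by (auto simp: B_def)
  ultimately show ?thesis
    using k by (simp add: B_def)
qed

text \<open>If Y1 and Y2 are conditionally independent given F and f(Y1) is conditionally centred,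
  then f(Y1) is orthogonal to every indicator of Y2: both integrals can be computed after
  replacing the indicator of Y2 by its conditional expectation Z, which is F-measurable.\<close>
lemma (in prob_space) cond_indep_centred_indicator:
  fixes Y1 Y2 :: "'a \<Rightarrow> 'b" and f :: "'b \<Rightarrow> real"
  assumes sub: "subalgebra M F"
    and Y1[measurable]: "Y1 \<in> measurable M N" and Y2[measurable]: "Y2 \<in> measurable M N"
    and ci: "\<And>B1 B2. B1 \<in> sets N \<Longrightarrow> B2 \<in> sets N \<Longrightarrow> AE \<omega> in M.
       real_cond_exp M F (indicator (Y1 -` B1 \<inter> Y2 -` B2 \<inter> space M)) \<omega>
       = real_cond_exp M F (indicator (Y1 -` B1 \<inter> space M)) \<omega>
         * real_cond_exp M F (indicator (Y2 -` B2 \<inter> space M)) \<omega>"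
    and f[measurable]: "f \<in> borel_measurable N"
    and int_f: "integrable M (\<lambda>\<omega>. f (Y1 \<omega>))"
    and centred: "AE \<omega> in M. real_cond_exp M F (\<lambda>\<omega>. f (Y1 \<omega>)) \<omega> = 0"
    and B[measurable]: "B \<in> sets N"
  shows "(\<integral>\<omega>. f (Y1 \<omega>) * indicator B (Y2 \<omega>) \<partial>M) = 0"
proof -
  interpret S: sigma_finite_subalgebra M F
    using sub by (intro finite_measure_subalgebra_is_sigma_finite) unfold_locales
  have int_ind: "integrable M (indicator A :: 'a \<Rightarrow> real)" if "A \<in> sets M" for A
    using that by (simp add: less_top[symmetric])
  define Z where "Z = real_cond_exp M F (indicator (Y2 -` B \<inter> space M))"
  have Z_F[measurable]: "Z \<in> borel_measurable F" and Z_M[measurable]: "Z \<in> borel_measurable M"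
    unfolding Z_def by (rule borel_measurable_cond_exp borel_measurable_cond_exp2)+
  have int_Z: "integrable M Z"
    unfolding Z_def by (rule S.real_cond_exp_int(1)[OF int_ind]) simp
  have Z_01: "AE \<omega> in M. 0 \<le> Z \<omega> \<and> Z \<omega> \<le> 1"
  proof -
    have "AE \<omega> in M. 0 \<le> Z \<omega>"
      unfolding Z_def by (rule S.real_cond_exp_pos) auto
    moreover have "AE \<omega> in M. Z \<omega> \<le> real_cond_exp M F (\<lambda>_. 1) \<omega>"
      unfolding Z_def by (rule S.real_cond_exp_mono) (auto simp: int_ind indicator_def)
    moreover have "AE \<omega> in M. real_cond_exp M F (\<lambda>_. 1) \<omega> = 1"
      by (rule S.real_cond_exp_F_meas) auto
    ultimately show ?thesis by eventually_elim auto
  qed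
  have events: "(\<integral>\<omega>. indicator B1 (Y1 \<omega>) * indicator B (Y2 \<omega>) \<partial>M) = (\<integral>\<omega>. indicator B1 (Y1 \<omega>) * Z \<omega> \<partial>M)"
    if B1[measurable]: "B1 \<in> sets N" for B1
  proof -
    define A1 where "A1 = Y1 -` B1 \<inter> space M"
    have A1[measurable]: "A1 \<in> sets M" unfolding A1_def by measurable
    have "(\<integral>\<omega>. indicator B1 (Y1 \<omega>) * indicator B (Y2 \<omega>) \<partial>M)
        = (\<integral>\<omega>. (indicator (Y1 -` B1 \<inter> Y2 -` B \<inter> space M) \<omega> :: real) \<partial>M)"
      by (intro Bochner_Integration.integral_cong) (auto simp: indicator_def)
    also have "\<dots> = (\<integral>\<omega>. real_cond_exp M F (indicator (Y1 -` B1 \<inter> Y2 -` B \<inter> space M)) \<omega> \<partial>M)"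
      by (rule S.real_cond_exp_int(2)[symmetric]) (rule int_ind, measurable)
    also have "\<dots> = (\<integral>\<omega>. real_cond_exp M F (indicator A1) \<omega> * Z \<omega> \<partial>M)"
      unfolding A1_def Z_def by (rule integral_cong_AE) (use ci[OF B1 B] in auto)
    also have "\<dots> = (\<integral>\<omega>. Z \<omega> * indicator A1 \<omega> \<partial>M)"
    proof (subst mult.commute, rule S.real_cond_exp_intg(2))
      show "integrable M (\<lambda>\<omega>. Z \<omega> * indicator A1 \<omega>)"
        by (rule Bochner_Integration.integrable_bound[OF int_Z]) (auto simp: indicator_def)
    qed auto
    also have "\<dots> = (\<integral>\<omega>. indicator B1 (Y1 \<omega>) * Z \<omega> \<partial>M)"
      by (intro Bochner_Integration.integral_cong) (auto simp: A1_def indicator_def)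
    finally show ?thesis .
  qed
  have "(\<integral>\<omega>. f (Y1 \<omega>) * indicator B (Y2 \<omega>) \<partial>M) = (\<integral>\<omega>. f (Y1 \<omega>) * Z \<omega> \<partial>M)"
  proof (rule integral_weighted_eq_if_events_eq[OF Y1 _ Z_M _ int_Z _ _ events f])
    show "integrable M (\<lambda>\<omega>. indicator B (Y2 \<omega>) :: real)"
      by (rule integrable_const_bound[where B=1]) (auto simp: indicator_def)
    show "AE \<omega> in M. 0 \<le> Z \<omega>" using Z_01 by eventually_elim auto
  qed auto
  also have "\<dots> = (\<integral>\<omega>. Z \<omega> * real_cond_exp M F (\<lambda>\<omega>. f (Y1 \<omega>)) \<omega> \<partial>M)"
  proof (subst mult.commute, rule S.real_cond_exp_intg(2)[symmetric])
    show "integrable M (\<lambda>\<omega>. Z \<omega> * f (Y1 \<omega>))"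
    proof (rule Bochner_Integration.integrable_bound[OF int_f])
      show "AE \<omega> in M. norm (Z \<omega> * f (Y1 \<omega>)) \<le> norm (f (Y1 \<omega>))"
        using Z_01 by eventually_elim (auto simp: abs_mult intro!: mult_left_le_one_le)
    qed measurable
  qed auto
  also have "\<dots> = 0"
    by (rule integral_eq_zero_AE) (use centred in auto)
  finally show ?thesis .
qed

text \<open>Splitting f(Y1) into positive and negative parts U and V, the previous lemma says that U and V
  give the same mass to every event of Y2, hence the same integral against g(Y2).\<close>
lemma (in prob_space) cond_indep_centred_uncorrelated:
  fixes Y1 Y2 :: "'a \<Rightarrow> 'b" and f g :: "'b \<Rightarrow> real"
  assumes sub: "subalgebra M F"
    and Y1[measurable]: "Y1 \<in> measurable M N" and Y2[measurable]: "Y2 \<in> measurable M N"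
    and ci: "\<And>B1 B2. B1 \<in> sets N \<Longrightarrow> B2 \<in> sets N \<Longrightarrow> AE \<omega> in M.
       real_cond_exp M F (indicator (Y1 -` B1 \<inter> Y2 -` B2 \<inter> space M)) \<omega>
       = real_cond_exp M F (indicator (Y1 -` B1 \<inter> space M)) \<omega>
         * real_cond_exp M F (indicator (Y2 -` B2 \<inter> space M)) \<omega>"
    and f[measurable]: "f \<in> borel_measurable N" and g[measurable]: "g \<in> borel_measurable N"
    and int_f: "integrable M (\<lambda>\<omega>. f (Y1 \<omega>))"
    and int_fg: "integrable M (\<lambda>\<omega>. f (Y1 \<omega>) * g (Y2 \<omega>))"
    and centred: "AE \<omega> in M. real_cond_exp M F (\<lambda>\<omega>. f (Y1 \<omega>)) \<omega> = 0"
  shows "(\<integral>\<omega>. f (Y1 \<omega>) * g (Y2 \<omega>) \<partial>M) = 0"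
proof -
  define U where "U \<omega> = max (f (Y1 \<omega>)) 0" for \<omega>
  define V where "V \<omega> = max (- f (Y1 \<omega>)) 0" for \<omega>
  have [measurable]: "U \<in> borel_measurable M" "V \<in> borel_measurable M"
    unfolding U_def V_def by measurable
  have UV: "f (Y1 \<omega>) = U \<omega> - V \<omega>" for \<omega>
    unfolding U_def V_def by auto
  have UV_bound: "\<bar>U \<omega>\<bar> \<le> \<bar>f (Y1 \<omega>)\<bar>" "\<bar>V \<omega>\<bar> \<le> \<bar>f (Y1 \<omega>)\<bar>" for \<omega>
    unfolding U_def V_def by auto
  have int_h: "integrable M (\<lambda>\<omega>. h (Y2 \<omega>) * W \<omega>)"
    if [measurable]: "h \<in> borel_measurable N" "W \<in> borel_measurable M"
      and "\<And>\<omega>. \<bar>h (Y2 \<omega>) * W \<omega>\<bar> \<le> \<bar>f (Y1 \<omega>) * g (Y2 \<omega>)\<bar> + \<bar>f (Y1 \<omega>)\<bar>" for h W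
    by (rule Bochner_Integration.integrable_bound[of _ "\<lambda>\<omega>. \<bar>f (Y1 \<omega>) * g (Y2 \<omega>)\<bar> + \<bar>f (Y1 \<omega>)\<bar>"])
      (use int_f int_fg that in auto)
  have int_gW: "integrable M (\<lambda>\<omega>. g (Y2 \<omega>) * W \<omega>)"
    if [measurable]: "W \<in> borel_measurable M" and W: "\<And>\<omega>. \<bar>W \<omega>\<bar> \<le> \<bar>f (Y1 \<omega>)\<bar>" for W
  proof (rule int_h)
    fix \<omega>
    have "\<bar>g (Y2 \<omega>) * W \<omega>\<bar> \<le> \<bar>g (Y2 \<omega>)\<bar> * \<bar>f (Y1 \<omega>)\<bar>"
      using W[of \<omega>] by (simp add: abs_mult mult_left_mono)
    then show "\<bar>g (Y2 \<omega>) * W \<omega>\<bar> \<le> \<bar>f (Y1 \<omega>) * g (Y2 \<omega>)\<bar> + \<bar>f (Y1 \<omega>)\<bar>"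
      by (simp add: abs_mult mult.commute)
  qed measurable
  have int_gU: "integrable M (\<lambda>\<omega>. g (Y2 \<omega>) * U \<omega>)"
    by (rule int_gW[OF _ UV_bound(1)]) measurable
  have int_gV: "integrable M (\<lambda>\<omega>. g (Y2 \<omega>) * V \<omega>)"
    by (rule int_gW[OF _ UV_bound(2)]) measurable
  have same_mass: "(\<integral>\<omega>. indicator B (Y2 \<omega>) * U \<omega> \<partial>M) = (\<integral>\<omega>. indicator B (Y2 \<omega>) * V \<omega> \<partial>M)"
    if B[measurable]: "B \<in> sets N" for B
  proof -
    have int_B: "integrable M (\<lambda>\<omega>. indicator B (Y2 \<omega>) * W \<omega>)"
      if [measurable]: "W \<in> borel_measurable M" and "\<And>\<omega>. \<bar>W \<omega>\<bar> \<le> \<bar>f (Y1 \<omega>)\<bar>" for W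
      using that by (intro int_h) (auto simp: indicator_def intro!: add_increasing[OF abs_ge_zero])
    have "(\<integral>\<omega>. indicator B (Y2 \<omega>) * U \<omega> \<partial>M) - (\<integral>\<omega>. indicator B (Y2 \<omega>) * V \<omega> \<partial>M)
        = (\<integral>\<omega>. f (Y1 \<omega>) * indicator B (Y2 \<omega>) \<partial>M)"
      using int_B UV_bound by (simp add: UV algebra_simps flip: Bochner_Integration.integral_diff)
    also have "\<dots> = 0"
      by (rule cond_indep_centred_indicator[OF sub Y1 Y2 ci f int_f centred B])
    finally show ?thesis by simp
  qed
  have "(\<integral>\<omega>. g (Y2 \<omega>) * U \<omega> \<partial>M) = (\<integral>\<omega>. g (Y2 \<omega>) * V \<omega> \<partial>M)"
  proof (rule integral_weighted_eq_if_events_eq[OF Y2 _ _ _ _ _ _ same_mass g])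
    show "integrable M U" "integrable M V"
      using UV_bound by (auto intro: Bochner_Integration.integrable_bound[OF int_f])
  qed (auto simp: U_def V_def)
  moreover have "(\<integral>\<omega>. f (Y1 \<omega>) * g (Y2 \<omega>) \<partial>M) = (\<integral>\<omega>. g (Y2 \<omega>) * U \<omega> - g (Y2 \<omega>) * V \<omega> \<partial>M)"
    by (intro Bochner_Integration.integral_cong) (simp_all add: UV algebra_simps)
  ultimately show ?thesis
    using Bochner_Integration.integral_diff[OF int_gU int_gV] by simp
qed

text \<open>L2 criterion for almost sure convergence: if the second moments of Z n are summable,
  then the sum of the Z n squared has finite integral, hence is finite almost everywhere, so
  Z n tends to 0 almost everywhere.\<close>
lemma AE_tendsto_zero_if_summable_second_moments:
  fixes Z :: "nat \<Rightarrow> 'a \<Rightarrow> real"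
  assumes meas[measurable]: "\<And>n. Z n \<in> borel_measurable M"
    and int: "\<And>n. integrable M (\<lambda>x. Z n x ^ 2)"
    and summ: "summable (\<lambda>n. \<integral>x. Z n x ^ 2 \<partial>M)"
  shows "AE x in M. (\<lambda>n. Z n x) \<longlonglongrightarrow> 0"
proof -
  have "(\<integral>\<^sup>+x. (\<Sum>n. ennreal (Z n x ^ 2)) \<partial>M) = (\<Sum>n. \<integral>\<^sup>+x. ennreal (Z n x ^ 2) \<partial>M)"
    by (rule nn_integral_suminf) measurable
  also have "\<dots> = (\<Sum>n. ennreal (\<integral>x. Z n x ^ 2 \<partial>M))"
    by (intro suminf_cong nn_integral_eq_integral int) auto
  also have "\<dots> = ennreal (\<Sum>n. \<integral>x. Z n x ^ 2 \<partial>M)"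
    by (rule suminf_ennreal2) (auto intro: summ)
  finally have "(\<integral>\<^sup>+x. (\<Sum>n. ennreal (Z n x ^ 2)) \<partial>M) \<noteq> \<infinity>"
    by simp
  then have "AE x in M. (\<Sum>n. ennreal (Z n x ^ 2)) \<noteq> \<infinity>"
    by (intro nn_integral_PInf_AE) measurable
  then show ?thesis
  proof (rule AE_mp, intro AE_I2 impI)
    fix x assume "(\<Sum>n. ennreal (Z n x ^ 2)) \<noteq> \<infinity>"
    then have "summable (\<lambda>n. Z n x ^ 2)"
      by (intro summable_suminf_not_top) auto
    then have "(\<lambda>n. sqrt (Z n x ^ 2)) \<longlonglongrightarrow> sqrt 0"
      by (intro tendsto_real_sqrt summable_LIMSEQ_zero)
    then show "(\<lambda>n. Z n x) \<longlonglongrightarrow> 0"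
      by (simp add: tendsto_rabs_zero_iff)
  qed
qed

section \<open>The Perron eigenvector of a positive 2x2 matrix\<close>

lemma eigen2_det:
  assumes "eigen2 P l"
  shows "(P 0 0 - l) * (P 1 1 - l) - P 0 1 * P 1 0 = 0"
proof -
  obtain v0 v1 where v: "(v0, v1) \<noteq> (0, 0)" "P 0 0 * v0 + P 0 1 * v1 = l * v0"
    "P 1 0 * v0 + P 1 1 * v1 = l * v1"
    using assms unfolding eigen2_def by blast
  let ?d = "(P 0 0 - l) * (P 1 1 - l) - P 0 1 * P 1 0"
  have "?d * v0 = (P 1 1 - l) * (P 0 0 * v0 + P 0 1 * v1 - l * v0) - P 0 1 * (P 1 0 * v0 + P 1 1 * v1 - l * v1)"
    "?d * v1 = (P 0 0 - l) * (P 1 0 * v0 + P 1 1 * v1 - l * v1) - P 1 0 * (P 0 0 * v0 + P 0 1 * v1 - l * v0)"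
    by (simp_all add: algebra_simps)
  then show ?thesis using v by auto
qed

text \<open>The eigenvalues are the (finitely many) roots of the characteristic polynomial; the larger root
  exceeds both diagonal entries, which forces the eigenvector to have entries of equal sign.\<close>
lemma perron2_eigenvector:
  fixes P :: "nat \<Rightarrow> nat \<Rightarrow> real"
  assumes pos: "\<And>i j. i \<le> 1 \<Longrightarrow> j \<le> 1 \<Longrightarrow> P i j > 0"
  obtains v0 v1 where "v0 > 0" "v1 > 0"
    "P 0 0 * v0 + P 0 1 * v1 = perron2 P * v0" "P 1 0 * v0 + P 1 1 * v1 = perron2 P * v1"
proof -
  have p01: "P 0 1 > 0" and p10: "P 1 0 > 0" using pos by auto
  define q where "q = [:P 0 0 * P 1 1 - P 0 1 * P 1 0, -(P 0 0 + P 1 1), 1:]"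
  have "{l. eigen2 P l} \<subseteq> {x. poly q x = 0}"
    using eigen2_det by (fastforce simp: q_def algebra_simps)
  moreover have "q \<noteq> 0" unfolding q_def by simp
  ultimately have fin: "finite {l. eigen2 P l}"
    using poly_roots_finite finite_subset by blast
  define s where "s = sqrt ((P 0 0 - P 1 1)^2 + 4 * P 0 1 * P 1 0)"
  have s2: "s^2 = (P 0 0 - P 1 1)^2 + 4 * P 0 1 * P 1 0"
    unfolding s_def using p01 p10 by simp
  have s_gt: "s > \<bar>P 0 0 - P 1 1\<bar>"
    unfolding s_def using p01 p10 by (metis real_sqrt_abs real_sqrt_less_mono less_add_same_cancel1 mult_pos_pos zero_less_numeral)
  define lp where "lp = (P 0 0 + P 1 1 + s) / 2"
  have lp_eig: "eigen2 P lp"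
    unfolding eigen2_def
  proof (intro exI conjI)
    show "(P 0 1, lp - P 0 0) \<noteq> (0, 0)" using p01 by simp
    show "P 0 0 * P 0 1 + P 0 1 * (lp - P 0 0) = lp * P 0 1" by (simp add: algebra_simps)
    have "lp * lp - (P 0 0 + P 1 1) * lp + (P 0 0 * P 1 1 - P 0 1 * P 1 0) = 0"
      unfolding lp_def using s2 by (simp add: field_simps power2_eq_square)
    then show "P 1 0 * P 0 1 + P 1 1 * (lp - P 0 0) = lp * (lp - P 0 0)" by (simp add: algebra_simps)
  qed
  have "perron2 P \<ge> lp"
    unfolding perron2_def using fin lp_eig by (simp add: Max_ge)
  moreover have "lp > P 0 0"
    unfolding lp_def using s_gt by simp
  ultimately have pi_gt: "perron2 P > P 0 0" by simp
  have "perron2 P \<in> {l. eigen2 P l}"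
    unfolding perron2_def using fin lp_eig by (intro Max_in) auto
  then obtain v0 v1 where v: "(v0, v1) \<noteq> (0, 0)" "P 0 0 * v0 + P 0 1 * v1 = perron2 P * v0"
      "P 1 0 * v0 + P 1 1 * v1 = perron2 P * v1"
    unfolding eigen2_def by blast
  then have v1: "v1 = (perron2 P - P 0 0) * v0 / P 0 1"
    using p01 by (simp add: field_simps)
  then have "v0 \<noteq> 0" using v(1) by auto
  show ?thesis
  proof (cases "v0 > 0")
    case True
    moreover have "v1 > 0" using v1 True pi_gt p01 by simp
    ultimately show ?thesis using that v by blast
  next
    case False
    then have "v0 < 0" using \<open>v0 \<noteq> 0\<close> by simp
    moreover have "v1 < 0" using v1 \<open>v0 < 0\<close> pi_gt p01 by (simp add: divide_neg_pos mult_pos_neg)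
    ultimately show ?thesis using that[of "- v0" "- v1"] v by (simp add: algebra_simps)
  qed
qed

lemma geometric_sum_le:
  fixes q :: real
  assumes "q > 1"
  shows "(\<Sum>m\<le>n. q^m) \<le> q^(n+1) / (q - 1)"
  using assms by (induction n) (simp_all add: field_simps)

section \<open>The observation process\<close>

locale observation_process = prob_space M for M :: "'a measure" +
  fixes delta :: "nat \<Rightarrow> 'a \<Rightarrow> real" and zeta :: "nat \<Rightarrow> 'a \<Rightarrow> bool \<times> bool"
    and p :: "nat \<Rightarrow> (bool \<times> bool) pmf"
  assumes delta1: "\<And>\<omega>. delta 1 \<omega> = 1"
    and delta_even: "\<And>k \<omega>. k \<ge> 1 \<Longrightarrow> delta (2*k) \<omega> = delta k \<omega> * of_bool (fst (zeta k \<omega>))"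
    and delta_odd: "\<And>k \<omega>. k \<ge> 1 \<Longrightarrow> delta (2*k+1) \<omega> = delta k \<omega> * of_bool (snd (zeta k \<omega>))"
    and zeta_meas: "\<And>k. k \<ge> 1 \<Longrightarrow> zeta k \<in> measurable M (count_space UNIV)"
    and zeta_law: "\<And>k. k \<ge> 1 \<Longrightarrow> distr M (count_space UNIV) (zeta k) = measure_pmf (p (k mod 2))"
    and zeta_indep: "indep_vars (\<lambda>_. count_space UNIV) zeta {1..}"
begin

definition daughter_flag :: "nat \<Rightarrow> bool \<times> bool \<Rightarrow> real" where
  "daughter_flag c z = of_bool (if c = 0 then fst z else snd z)"

lemma daughter_flag_measurable [measurable]: "daughter_flag c \<in> borel_measurable (count_space UNIV)"
  by simp

lemma delta_root: "delta 1 = (\<lambda>_. 1)"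
  using delta1 by auto

lemma delta_daughter: "k \<ge> 1 \<Longrightarrow> c \<le> 1 \<Longrightarrow> delta (2*k+c) \<omega> = delta k \<omega> * daughter_flag c (zeta k \<omega>)"
  using delta_even delta_odd by (cases c) (auto simp: daughter_flag_def)

lemma delta_parent: "k \<ge> 2 \<Longrightarrow> delta k \<omega> = delta (k div 2) \<omega> * daughter_flag (k mod 2) (zeta (k div 2) \<omega>)"
  using delta_daughter[of "k div 2" "k mod 2" \<omega>] by simp

lemma delta_01: "k \<ge> 1 \<Longrightarrow> delta k \<omega> = 0 \<or> delta k \<omega> = 1"
proof (induction k rule: less_induct)
  case (less k)
  then show ?case
    using delta1 delta_parent[of k \<omega>] less.IH[of "k div 2"] by (cases "k = 1") (auto simp: daughter_flag_def)
qed

lemma delta_measurable: "k \<ge> 1 \<Longrightarrow> delta k \<in> borel_measurable M"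
proof (induction k rule: less_induct)
  case (less k)
  show ?case
  proof (cases "k = 1")
    case True
    then show ?thesis unfolding True delta_root by simp
  next
    case False
    then have k: "k \<ge> 2" "k div 2 < k" "k div 2 \<ge> 1" using less.prems by auto
    have "(\<lambda>\<omega>. daughter_flag (k mod 2) (zeta (k div 2) \<omega>)) \<in> borel_measurable M"
      using zeta_meas[OF k(3)] by measurable
    then show ?thesis
      using less.IH[OF k(2,3)] delta_parent[OF k(1)] by (simp cong: measurable_cong)
  qed
qed

definition zeta_before :: "nat \<Rightarrow> 'a measure" where
  "zeta_before K = vimage_algebra (space M) (\<lambda>\<omega>. restrict (\<lambda>m. zeta m \<omega>) {1..<K})
     (PiM {1..<K} (\<lambda>_. count_space UNIV))"

lemma delta_measurable_before: "1 \<le> k \<Longrightarrow> k \<le> K \<Longrightarrow> delta k \<in> borel_measurable (zeta_before K)"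
proof (induction k rule: less_induct)
  case (less k)
  show ?case
  proof (cases "k = 1")
    case True
    then show ?thesis unfolding True delta_root by simp
  next
    case False
    then have k: "k \<ge> 2" "k div 2 < k" "k div 2 \<ge> 1" "k div 2 \<in> {1..<K}" using less.prems by auto
    have "(\<lambda>\<omega>. (\<lambda>x. daughter_flag (k mod 2) (x (k div 2))) (restrict (\<lambda>m. zeta m \<omega>) {1..<K}))
        \<in> borel_measurable (zeta_before K)"
      unfolding zeta_before_def
    proof (rule measurable_vimage_algebra_comp)
      show "(\<lambda>\<omega>. restrict (\<lambda>m. zeta m \<omega>) {1..<K}) \<in> space M \<rightarrow> space (PiM {1..<K} (\<lambda>_. count_space UNIV))"
        by (auto simp: space_PiM)
      show "(\<lambda>x. daughter_flag (k mod 2) (x (k div 2))) \<in> borel_measurable (PiM {1..<K} (\<lambda>_. count_space UNIV))"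
        using measurable_comp[OF measurable_component_singleton[OF k(4), of "\<lambda>_. count_space UNIV"],
            of "daughter_flag (k mod 2)" borel]
        by (simp add: comp_def)
    qed
    then have "(\<lambda>\<omega>. daughter_flag (k mod 2) (zeta (k div 2) \<omega>)) \<in> borel_measurable (zeta_before K)"
      using k(4) by simp
    then show ?thesis
      using less.IH[OF k(2,3)] less.prems delta_parent[OF k(1)] by (simp cong: measurable_cong)
  qed
qed

text \<open>Observation probabilities follow the mean-offspring matrix: since delta k depends on the zeta
  of earlier individuals only, it is independent of zeta k, and E[delta (2k+c)] = E[delta k] p_{k mod 2, c}.\<close>
lemma expectation_delta_daughter:
  assumes k: "k \<ge> 1" and c: "c \<le> 1"
  shows "expectation (delta (2*k+c)) = expectation (delta k) * pmat p (k mod 2) c"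
proof -
  let ?Zk = "vimage_algebra (space M) (\<lambda>\<omega>. restrict (\<lambda>m. zeta m \<omega>) {k}) (PiM {k} (\<lambda>_. count_space UNIV))"
  have "indep_var (PiM {1..<k} (\<lambda>_. count_space UNIV)) (\<lambda>\<omega>. restrict (\<lambda>m. zeta m \<omega>) {1..<k})
       (PiM {k} (\<lambda>_. count_space UNIV)) (\<lambda>\<omega>. restrict (\<lambda>m. zeta m \<omega>) {k})"
    by (rule indep_var_restrict[OF zeta_indep]) (use k in auto)
  then have ind: "indep_set (sets (zeta_before k)) (sets ?Zk)"
    unfolding indep_var_eq zeta_before_def sets_vimage_algebra by simp
  have "(\<lambda>\<omega>. (\<lambda>x. daughter_flag c (x k)) (restrict (\<lambda>m. zeta m \<omega>) {k})) \<in> borel_measurable ?Zk"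
  proof (rule measurable_vimage_algebra_comp)
    show "(\<lambda>\<omega>. restrict (\<lambda>m. zeta m \<omega>) {k}) \<in> space M \<rightarrow> space (PiM {k} (\<lambda>_. count_space UNIV))"
      by (auto simp: space_PiM)
    show "(\<lambda>x. daughter_flag c (x k)) \<in> borel_measurable (PiM {k} (\<lambda>_. count_space UNIV))"
      using measurable_comp[OF measurable_component_singleton[of k "{k}" "\<lambda>_. count_space UNIV"],
          of "daughter_flag c" borel]
      by (simp add: comp_def)
  qed
  then have flag_meas: "(\<lambda>\<omega>. daughter_flag c (zeta k \<omega>)) \<in> borel_measurable ?Zk"
    by simp
  have int_delta: "integrable M (delta k)"
  proof (rule integrable_const_bound[where B=1])
    show "AE \<omega> in M. norm (delta k \<omega>) \<le> 1"
    proof (intro AE_I2)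
      fix \<omega> show "norm (delta k \<omega>) \<le> 1" using delta_01[OF k, of \<omega>] by auto
    qed
  qed (rule delta_measurable[OF k])
  have int_flag: "integrable M (\<lambda>\<omega>. daughter_flag c (zeta k \<omega>))"
  proof (rule integrable_const_bound[where B=1])
    show "AE \<omega> in M. norm (daughter_flag c (zeta k \<omega>)) \<le> 1"
      by (intro AE_I2) (simp add: daughter_flag_def)
  qed (use zeta_meas[OF k] in measurable)
  have "expectation (delta (2*k+c)) = (\<integral>\<omega>. delta k \<omega> * daughter_flag c (zeta k \<omega>) \<partial>M)"
    by (intro Bochner_Integration.integral_cong) (simp_all add: delta_daughter[OF k c])
  also have "\<dots> = expectation (delta k) * (\<integral>\<omega>. daughter_flag c (zeta k \<omega>) \<partial>M)"
    using indep_vimage_integral(2)[OF ind[unfolded zeta_before_def] _ flag_meas int_delta int_flag]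
      delta_measurable_before[OF k order_refl] by (simp add: zeta_before_def)
  also have "(\<integral>\<omega>. daughter_flag c (zeta k \<omega>) \<partial>M) = (\<integral>z. daughter_flag c z \<partial>measure_pmf (p (k mod 2)))"
    using integral_distr[OF zeta_meas[OF k], of "daughter_flag c"] by (simp add: zeta_law[OF k])
  also have "\<dots> = (\<Sum>z\<in>UNIV. daughter_flag c z * pmf (p (k mod 2)) z)"
    by (rule integral_measure_pmf_real) auto
  also have "\<dots> = pmat p (k mod 2) c"
    using c unfolding pmat_def daughter_flag_def UNIV_Times_UNIV[symmetric] UNIV_bool by (cases c) auto
  finally show ?thesis .
qed

lemma expectation_delta_nonneg: "k \<ge> 1 \<Longrightarrow> 0 \<le> expectation (delta k)"
  using delta_01 by (intro integral_nonneg_AE AE_I2) (metis order_refl zero_le_one)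

text \<open>Weighting each individual by v of its type, the expected generation sums evolve by
  the transpose of P; for an eigenvector v they grow geometrically.\<close>
lemma weighted_generation_sum:
  assumes eig: "\<And>t. t \<le> 1 \<Longrightarrow> pmat p t 0 * v 0 + pmat p t 1 * v 1 = r * v t"
  shows "(\<Sum>k\<in>Gen n. expectation (delta k) * v (k mod 2)) = r ^ n * v 1"
proof (induction n)
  case 0
  have "Gen 0 = {1}" by (auto simp: Gen_def)
  moreover have "expectation (delta 1) = 1" unfolding delta_root by (simp add: prob_space)
  ultimately show ?case by simp
next
  case (Suc n)
  have "(\<Sum>k\<in>Gen (Suc n). expectation (delta k) * v (k mod 2))
      = (\<Sum>k\<in>Gen n. expectation (delta (2*k)) * v 0 + expectation (delta (2*k+1)) * v 1)"
    by (simp add: sum_Gen_Suc)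
  also have "\<dots> = (\<Sum>k\<in>Gen n. r * (expectation (delta k) * v (k mod 2)))"
  proof (rule sum.cong[OF refl])
    fix k assume "k \<in> Gen n"
    then have k: "k \<ge> 1" by (rule Gen_ge1)
    have "expectation (delta (2*k)) * v 0 + expectation (delta (2*k+1)) * v 1
        = expectation (delta k) * (pmat p (k mod 2) 0 * v 0 + pmat p (k mod 2) 1 * v 1)"
      using expectation_delta_daughter[OF k, of 0] expectation_delta_daughter[OF k, of 1]
      by (simp add: algebra_simps)
    also have "\<dots> = r * (expectation (delta k) * v (k mod 2))"
      using eig[of "k mod 2"] by simp
    finally show "expectation (delta (2*k)) * v 0 + expectation (delta (2*k+1)) * v 1
        = r * (expectation (delta k) * v (k mod 2))" .
  qed
  also have "\<dots> = r ^ Suc n * v 1"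
    using Suc by (simp add: sum_distrib_left[symmetric])
  finally show ?case .
qed

text \<open>Under (HO) the expected number of observed individuals in T n is O(pi^n): compare each
  generation sum with the eigenvector-weighted one, then sum the geometric series.\<close>
lemma expected_observed_bound:
  assumes pos: "\<And>i j. i \<le> 1 \<Longrightarrow> j \<le> 1 \<Longrightarrow> pmat p i j > 0"
    and pi_gt1: "perron2 (pmat p) > 1"
  obtains C where "\<And>n. (\<Sum>k\<in>Tn n. expectation (delta k)) \<le> C * perron2 (pmat p) ^ n"
proof -
  let ?pi = "perron2 (pmat p)"
  obtain v0 v1 where v: "v0 > 0" "v1 > 0" "pmat p 0 0 * v0 + pmat p 0 1 * v1 = ?pi * v0"
    "pmat p 1 0 * v0 + pmat p 1 1 * v1 = ?pi * v1"
    using perron2_eigenvector[of "pmat p", OF pos] by metis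
  define v where "v t = (if t = 0 then v0 else v1)" for t :: nat
  define vm where "vm = min v0 v1"
  have vm: "vm > 0" "\<And>t. vm \<le> v t" using v unfolding vm_def v_def by auto
  have eig: "pmat p t 0 * v 0 + pmat p t 1 * v 1 = ?pi * v t" if "t \<le> 1" for t
    using that v by (cases t) (auto simp: v_def)
  have generation: "(\<Sum>k\<in>Gen n. expectation (delta k)) \<le> ?pi ^ n * (v1 / vm)" for n
  proof -
    have "(\<Sum>k\<in>Gen n. expectation (delta k)) \<le> (\<Sum>k\<in>Gen n. expectation (delta k) * v (k mod 2)) / vm"
      unfolding sum_divide_distrib
    proof (rule sum_mono)
      fix k assume "k \<in> Gen n"
      then have "0 \<le> expectation (delta k)" by (intro expectation_delta_nonneg Gen_ge1)
      then have "expectation (delta k) * vm \<le> expectation (delta k) * v (k mod 2)"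
        by (rule mult_left_mono[OF vm(2)])
      then show "expectation (delta k) \<le> expectation (delta k) * v (k mod 2) / vm"
        by (simp add: pos_le_divide_eq[OF vm(1)])
    qed
    then show ?thesis using weighted_generation_sum[OF eig] by (simp add: v_def)
  qed
  show ?thesis
  proof (rule that)
    fix n
    have "(\<Sum>k\<in>Tn n. expectation (delta k)) \<le> (\<Sum>m\<le>n. ?pi ^ m) * (v1 / vm)"
      unfolding sum_Tn_Gen sum_distrib_right by (intro sum_mono generation)
    also have "\<dots> \<le> ?pi ^ (n + 1) / (?pi - 1) * (v1 / vm)"
      using geometric_sum_le[OF pi_gt1] v vm by (intro mult_right_mono) auto
    also have "\<dots> = (v1 / vm * ?pi / (?pi - 1)) * ?pi ^ n"
      by (simp add: field_simps)
    finally show "(\<Sum>k\<in>Tn n. expectation (delta k)) \<le> (v1 / vm * ?pi / (?pi - 1)) * ?pi ^ n" .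
  qed
qed

end

section \<open>Orthogonality of the noise\<close>

lemma abs_power_le_one_plus_power:
  fixes x :: real
  assumes "m \<le> n"
  shows "\<bar>x\<bar> ^ m \<le> 1 + \<bar>x\<bar> ^ n"
proof (cases "\<bar>x\<bar> \<le> 1")
  case True
  then have "\<bar>x\<bar> ^ m \<le> 1" by (simp add: power_le_one)
  then show ?thesis by (simp add: add_increasing2)
next
  case False
  then have "\<bar>x\<bar> ^ m \<le> \<bar>x\<bar> ^ n" using assms by (intro power_increasing) auto
  then show ?thesis by simp
qed

lemma abs_mult_le_sum_squares:
  fixes x y :: real
  shows "\<bar>x * y\<bar> \<le> x\<^sup>2 + y\<^sup>2"
proof -
  have "2 * (\<bar>x\<bar> * \<bar>y\<bar>) \<le> x\<^sup>2 + y\<^sup>2"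
    using sum_squares_bound[of "\<bar>x\<bar>" "\<bar>y\<bar>"] by (simp add: mult.assoc)
  moreover have "0 \<le> \<bar>x\<bar> * \<bar>y\<bar>" by simp
  ultimately show ?thesis unfolding abs_mult by linarith
qed

text \<open>The noise of the BAR process, with the hypotheses (HN.1) of order at most two and (HN.2).
  The history up to generation n is the sigma-algebra F n generated by the X k, k in T n.\<close>
locale bar_noise = prob_space M for M :: "'a measure" +
  fixes X eps :: "nat \<Rightarrow> 'a \<Rightarrow> real" and a b c d sigma2 :: real
  assumes X1_meas: "X 1 \<in> borel_measurable M"
    and eps_meas: "\<And>k. k \<ge> 2 \<Longrightarrow> eps k \<in> borel_measurable M"
    and X_even: "\<And>k \<omega>. k \<ge> 1 \<Longrightarrow> X (2*k) \<omega> = a + b * X k \<omega> + eps (2*k) \<omega>"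
    and X_odd: "\<And>k \<omega>. k \<ge> 1 \<Longrightarrow> X (2*k+1) \<omega> = c + d * X k \<omega> + eps (2*k+1) \<omega>"
    and eps_L8: "\<And>n k. k \<in> Gen (Suc n) \<Longrightarrow> integrable M (\<lambda>\<omega>. eps k \<omega> ^ 8)"
    and ce1: "\<And>n k. k \<in> Gen (Suc n) \<Longrightarrow>
       AE \<omega> in M. real_cond_exp M (gen_sigma M X (Tn n)) (eps k) \<omega> = 0"
    and ce2: "\<And>n k. k \<in> Gen (Suc n) \<Longrightarrow>
       AE \<omega> in M. real_cond_exp M (gen_sigma M X (Tn n)) (\<lambda>\<omega>. eps k \<omega> ^ 2) \<omega> = sigma2"
    and HN2: "\<And>n. cond_indep_given M (gen_sigma M X (Tn n)) (Gen n)
       (\<lambda>k \<omega>. (eps (2*k) \<omega>, eps (2*k+1) \<omega>)) (borel :: (real \<times> real) measure)"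
begin

abbreviation history :: "nat \<Rightarrow> 'a measure" where
  "history n \<equiv> gen_sigma M X (Tn n)"

lemma eps_from_X:
  "k \<ge> 2 \<Longrightarrow> eps k \<omega> = X k \<omega> - (if even k then a + b * X (k div 2) \<omega> else c + d * X (k div 2) \<omega>)"
  using X_even[of "k div 2" \<omega>] X_odd[of "k div 2" \<omega>] by (cases "even k") (auto elim!: evenE oddE)

lemma X_measurable: "k \<ge> 1 \<Longrightarrow> X k \<in> borel_measurable M"
proof (induction k rule: less_induct)
  case (less k)
  show ?case
  proof (cases "k = 1")
    case True
    then show ?thesis using X1_meas by simp
  next
    case False
    then have k: "k \<ge> 2" "k div 2 < k" "k div 2 \<ge> 1" using less.prems by auto
    have "X k = (\<lambda>\<omega>. eps k \<omega> + (if even k then a + b * X (k div 2) \<omega> else c + d * X (k div 2) \<omega>))"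
      using eps_from_X[OF k(1)] by auto
    then show ?thesis using less.IH[OF k(2,3)] eps_meas[OF k(1)] by simp
  qed
qed

lemma history_subalgebra: "sigma_finite_subalgebra M (history n)"
  by (rule gen_sigma_subalgebra) (auto intro: X_measurable Tn_ge1)

lemma eps_history_measurable:
  assumes "2 \<le> j" "j < 2^(m+1)"
  shows "eps j \<in> borel_measurable (history m)"
proof -
  have "j \<in> Tn m" "j div 2 \<in> Tn m" using assms unfolding Tn_def by auto
  then have "X j \<in> borel_measurable (history m)" "X (j div 2) \<in> borel_measurable (history m)"
    by (auto intro: gen_sigma_measurable)
  moreover have "eps j = (\<lambda>\<omega>. X j \<omega> - (if even j then a + b * X (j div 2) \<omega> else c + d * X (j div 2) \<omega>))"
    using eps_from_X[OF assms(1)] by auto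
  ultimately show ?thesis by simp
qed

lemma eps_power_integrable:
  assumes k: "k \<ge> 2" and m: "m \<le> 8"
  shows "integrable M (\<lambda>\<omega>. eps k \<omega> ^ m)"
proof (rule Bochner_Integration.integrable_bound)
  obtain n where "k \<in> Gen (Suc n)" using Gen_Suc_exists[OF k] by blast
  then show "integrable M (\<lambda>\<omega>. 1 + eps k \<omega> ^ 8)" using eps_L8 by simp
  show "AE \<omega> in M. norm (eps k \<omega> ^ m) \<le> norm (1 + eps k \<omega> ^ 8)"
    using abs_power_le_one_plus_power[OF m] by (simp add: power_abs power_even_abs)
qed (use eps_meas[OF k] in simp)

lemma eps_integrable: "k \<ge> 2 \<Longrightarrow> integrable M (eps k)"
  using eps_power_integrable[of k 1] by simp

lemma eps_product_integrable:
  assumes "j \<ge> 2" "l \<ge> 2"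
  shows "integrable M (\<lambda>\<omega>. eps j \<omega> * eps l \<omega>)"
proof (rule Bochner_Integration.integrable_bound)
  show "integrable M (\<lambda>\<omega>. eps j \<omega> ^ 2 + eps l \<omega> ^ 2)"
    using eps_power_integrable[OF assms(1), of 2] eps_power_integrable[OF assms(2), of 2] by simp
  show "AE \<omega> in M. norm (eps j \<omega> * eps l \<omega>) \<le> norm (eps j \<omega> ^ 2 + eps l \<omega> ^ 2)"
    using abs_mult_le_sum_squares by simp
qed (use eps_meas assms in simp)

text \<open>A noise variable is orthogonal to every earlier one: condition on the history.\<close>
lemma eps_orthogonal_earlier:
  assumes j: "2 \<le> j" "j < 2^(m+1)" and l: "l \<in> Gen (Suc m)"
  shows "expectation (\<lambda>\<omega>. eps j \<omega> * eps l \<omega>) = 0"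
proof -
  interpret S: sigma_finite_subalgebra M "history m" by (rule history_subalgebra)
  have l2: "l \<ge> 2" by (rule Gen_Suc_ge2[OF l])
  have "expectation (\<lambda>\<omega>. eps j \<omega> * eps l \<omega>) = expectation (\<lambda>\<omega>. eps j \<omega> * real_cond_exp M (history m) (eps l) \<omega>)"
    by (rule S.real_cond_exp_intg(2)[symmetric])
      (use eps_product_integrable[OF j(1) l2] eps_history_measurable[OF j] eps_meas[OF l2] in auto)
  also have "\<dots> = 0"
    by (rule integral_eq_zero_AE) (use ce1[OF l] in auto)
  finally show ?thesis .
qed

text \<open>Noises of daughters of two distinct mothers of the same generation are orthogonal:
  the sister pairs are conditionally independent given the history, and centred.\<close>
lemma eps_orthogonal_cousins:
  assumes k1: "k1 \<in> Gen m" and k2: "k2 \<in> Gen m" and ne: "k1 \<noteq> k2" and c: "c1 \<le> 1" "c2 \<le> 1"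
  shows "expectation (\<lambda>\<omega>. eps (2*k1+c1) \<omega> * eps (2*k2+c2) \<omega>) = 0"
proof -
  interpret S: sigma_finite_subalgebra M "history m" by (rule history_subalgebra)
  define Y where "Y = (\<lambda>k \<omega>. (eps (2*k) \<omega>, eps (2*k+1) \<omega>))"
  define coord :: "nat \<Rightarrow> real \<times> real \<Rightarrow> real" where "coord c y = (if c = 0 then fst y else snd y)" for c y
  have eps_coord: "eps (2*k+c) = (\<lambda>\<omega>. coord c (Y k \<omega>))" if "c \<le> 1" for k c
    using that by (cases c) (auto simp: coord_def Y_def)
  have coord_meas: "coord c \<in> borel_measurable borel" for c
    unfolding coord_def by (cases "c = 0") (auto intro!: borel_measurable_continuous_onI continuous_intros)
  have Y_meas: "Y k \<in> borel_measurable M" if "k \<in> Gen m" for k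
    using eps_meas Gen_ge1[OF that] unfolding Y_def by simp
  have children: "2*k1+c1 \<ge> 2" "2*k2+c2 \<ge> 2" "2*k1+c1 \<in> Gen (Suc m)"
    using Gen_ge1[OF k1] Gen_ge1[OF k2] k1 c by (auto simp: Gen_Suc_iff_parent)
  have "expectation (\<lambda>\<omega>. coord c1 (Y k1 \<omega>) * coord c2 (Y k2 \<omega>)) = 0"
  proof (rule cond_indep_centred_uncorrelated[OF S.subalg Y_meas[OF k1] Y_meas[OF k2] _ coord_meas coord_meas])
    show "AE \<omega> in M. real_cond_exp M (history m) (indicator (Y k1 -` B1 \<inter> Y k2 -` B2 \<inter> space M)) \<omega>
       = real_cond_exp M (history m) (indicator (Y k1 -` B1 \<inter> space M)) \<omega>
         * real_cond_exp M (history m) (indicator (Y k2 -` B2 \<inter> space M)) \<omega>"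
      if "B1 \<in> sets borel" "B2 \<in> sets borel" for B1 B2
      using cond_indep_given_pair[OF HN2[of m, folded Y_def] k1 k2 ne that] .
    show "integrable M (\<lambda>\<omega>. coord c1 (Y k1 \<omega>))"
      using eps_integrable[OF children(1)] eps_coord[OF c(1)] by simp
    show "integrable M (\<lambda>\<omega>. coord c1 (Y k1 \<omega>) * coord c2 (Y k2 \<omega>))"
      using eps_product_integrable[OF children(1,2)] eps_coord c by simp
    show "AE \<omega> in M. real_cond_exp M (history m) (\<lambda>\<omega>. coord c1 (Y k1 \<omega>)) \<omega> = 0"
      using ce1[OF children(3)] eps_coord[OF c(1)] by simp
  qed
  then show ?thesis using eps_coord c by simp
qed

lemma eps_orthogonal:
  assumes j: "j \<ge> 2" and l: "l \<ge> 2" and mothers: "j div 2 \<noteq> l div 2"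
  shows "expectation (\<lambda>\<omega>. eps j \<omega> * eps l \<omega>) = 0"
proof -
  have earlier: "expectation (\<lambda>\<omega>. eps j \<omega> * eps l \<omega>) = 0"
    if j: "j \<ge> 2" and jl: "j < l" and mothers: "j div 2 \<noteq> l div 2" for j l
  proof -
    obtain m where lG: "l \<in> Gen (Suc m)" using Gen_Suc_exists jl j by fastforce
    show ?thesis
    proof (cases "j < 2^(m+1)")
      case True
      then show ?thesis using eps_orthogonal_earlier[OF j True lG] by simp
    next
      case False
      then have "j div 2 \<in> Gen m" "l div 2 \<in> Gen m"
        using jl lG unfolding Gen_Suc_iff_parent[symmetric] by (auto simp: Gen_def)
      from eps_orthogonal_cousins[OF this mothers, of "j mod 2" "l mod 2"] show ?thesis by simp
    qed
  qed
  show ?thesis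
  proof (cases "j < l")
    case False
    then have "l < j" using mothers by (cases "l = j") auto
    then show ?thesis using earlier[of l j] l mothers by (simp add: mult.commute)
  qed (use earlier j mothers in simp)
qed

lemma eps_second_moment:
  assumes j: "j \<ge> 2"
  shows "expectation (\<lambda>\<omega>. eps j \<omega> * eps j \<omega>) = sigma2"
proof -
  obtain m where jG: "j \<in> Gen (Suc m)" using Gen_Suc_exists[OF j] by blast
  interpret S: sigma_finite_subalgebra M "history m" by (rule history_subalgebra)
  have "expectation (\<lambda>\<omega>. eps j \<omega> * eps j \<omega>) = expectation (\<lambda>\<omega>. real_cond_exp M (history m) (\<lambda>\<omega>. eps j \<omega> ^ 2) \<omega>)"
    using S.real_cond_exp_int(2)[OF eps_power_integrable[OF j, of 2]] by (simp add: power2_eq_square)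
  also have "\<dots> = expectation (\<lambda>_. sigma2)"
    by (rule integral_cong_AE) (use ce2[OF jG] in auto)
  finally show ?thesis by (simp add: prob_space)
qed

lemma sigma2_nonneg: "0 \<le> sigma2"
  using eps_second_moment[of 2] integral_nonneg_AE[of "\<lambda>\<omega>. eps 2 \<omega> * eps 2 \<omega>" M] by simp

end

section \<open>Second moment of the observed noise sums\<close>

lemma integral_square_sum:
  fixes Z :: "'i \<Rightarrow> 'a \<Rightarrow> real"
  assumes fin: "finite I" and int: "\<And>k l. k \<in> I \<Longrightarrow> l \<in> I \<Longrightarrow> integrable M (\<lambda>\<omega>. Z k \<omega> * Z l \<omega>)"
  shows "integrable M (\<lambda>\<omega>. (\<Sum>k\<in>I. Z k \<omega>)\<^sup>2)"
    "(\<integral>\<omega>. (\<Sum>k\<in>I. Z k \<omega>)\<^sup>2 \<partial>M) = (\<Sum>k\<in>I. \<Sum>l\<in>I. \<integral>\<omega>. Z k \<omega> * Z l \<omega> \<partial>M)"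
proof -
  have square: "(\<Sum>k\<in>I. Z k \<omega>)\<^sup>2 = (\<Sum>k\<in>I. \<Sum>l\<in>I. Z k \<omega> * Z l \<omega>)" for \<omega>
    by (simp add: power2_eq_square sum_product)
  show "integrable M (\<lambda>\<omega>. (\<Sum>k\<in>I. Z k \<omega>)\<^sup>2)"
    unfolding square using int by auto
  show "(\<integral>\<omega>. (\<Sum>k\<in>I. Z k \<omega>)\<^sup>2 \<partial>M) = (\<Sum>k\<in>I. \<Sum>l\<in>I. \<integral>\<omega>. Z k \<omega> * Z l \<omega> \<partial>M)"
    unfolding square using int
    by (subst Bochner_Integration.integral_sum) (auto intro!: sum.cong Bochner_Integration.integral_sum)
qed

locale observed_bar_noise = bar_noise M X eps a b c d sigma2 + observation_process M delta zeta p
  for M :: "'a measure" and X eps a b c d sigma2 delta zeta p +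
  assumes indep_obs_noise: "indep_set
       (sets (vimage_algebra (space M) (\<lambda>\<omega> k. (delta k \<omega>, zeta k \<omega>))
          (Pi\<^sub>M UNIV (\<lambda>_. (borel :: real measure) \<Otimes>\<^sub>M count_space (UNIV :: (bool \<times> bool) set)))))
       (sets (vimage_algebra (space M) (\<lambda>\<omega> k. (X k \<omega>, eps k \<omega>))
          (Pi\<^sub>M UNIV (\<lambda>_. (borel :: real measure) \<Otimes>\<^sub>M (borel :: real measure)))))"
begin

definition obs_noise_sum :: "nat \<Rightarrow> nat \<Rightarrow> 'a \<Rightarrow> real" where
  "obs_noise_sum i n \<omega> = (\<Sum>k\<in>Tn n. delta (2*k+i) \<omega> * eps (2*k+i) \<omega>)"

lemma obs_noise_sum_measurable: "obs_noise_sum i n \<in> borel_measurable M"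
proof -
  have "(\<lambda>\<omega>. delta (2*k+i) \<omega> * eps (2*k+i) \<omega>) \<in> borel_measurable M" if "k \<in> Tn n" for k
    using Tn_ge1[OF that] delta_measurable[of "2*k+i"] eps_meas[of "2*k+i"] by simp
  then show ?thesis unfolding obs_noise_sum_def[abs_def] by (rule borel_measurable_sum)
qed

lemma observed_noise_moment:
  assumes j: "j \<ge> 2" and l: "l \<ge> 2"
  shows "integrable M (\<lambda>\<omega>. (delta j \<omega> * delta l \<omega>) * (eps j \<omega> * eps l \<omega>))"
    "expectation (\<lambda>\<omega>. (delta j \<omega> * delta l \<omega>) * (eps j \<omega> * eps l \<omega>))
       = expectation (\<lambda>\<omega>. delta j \<omega> * delta l \<omega>) * expectation (\<lambda>\<omega>. eps j \<omega> * eps l \<omega>)"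
proof -
  have obs: "(\<lambda>\<omega>. delta j \<omega> * delta l \<omega>) \<in> borel_measurable (vimage_algebra (space M) (\<lambda>\<omega> k. (delta k \<omega>, zeta k \<omega>))
          (Pi\<^sub>M UNIV (\<lambda>_. (borel :: real measure) \<Otimes>\<^sub>M count_space (UNIV :: (bool \<times> bool) set))))"
    using measurable_vimage_algebra_comp[of "\<lambda>\<omega> k. (delta k \<omega>, zeta k \<omega>)" "space M" _
        "\<lambda>x. fst (x j) * fst (x l)" borel]
    by (simp add: space_PiM space_pair_measure)
  have noise: "(\<lambda>\<omega>. eps j \<omega> * eps l \<omega>) \<in> borel_measurable (vimage_algebra (space M) (\<lambda>\<omega> k. (X k \<omega>, eps k \<omega>))
          (Pi\<^sub>M UNIV (\<lambda>_. (borel :: real measure) \<Otimes>\<^sub>M (borel :: real measure))))"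
    using measurable_vimage_algebra_comp[of "\<lambda>\<omega> k. (X k \<omega>, eps k \<omega>)" "space M" _
        "\<lambda>x. snd (x j) * snd (x l)" borel]
    by (simp add: space_PiM space_pair_measure)
  have int_obs: "integrable M (\<lambda>\<omega>. delta j \<omega> * delta l \<omega>)"
  proof (rule integrable_const_bound[where B=1])
    show "AE \<omega> in M. norm (delta j \<omega> * delta l \<omega>) \<le> 1"
    proof (intro AE_I2)
      fix \<omega> show "norm (delta j \<omega> * delta l \<omega>) \<le> 1"
        using delta_01[of j \<omega>] delta_01[of l \<omega>] j l by auto
    qed
  qed (use delta_measurable[of j] delta_measurable[of l] j l in simp)
  show "integrable M (\<lambda>\<omega>. (delta j \<omega> * delta l \<omega>) * (eps j \<omega> * eps l \<omega>))"
    "expectation (\<lambda>\<omega>. (delta j \<omega> * delta l \<omega>) * (eps j \<omega> * eps l \<omega>))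
       = expectation (\<lambda>\<omega>. delta j \<omega> * delta l \<omega>) * expectation (\<lambda>\<omega>. eps j \<omega> * eps l \<omega>)"
    using indep_vimage_integral[OF indep_obs_noise obs noise int_obs eps_product_integrable[OF j l]] by simp_all
qed

lemma observed_noise_cross_moment:
  assumes k1: "k1 \<ge> 1" and k2: "k2 \<ge> 1" and i: "i \<le> 1"
  shows "expectation (\<lambda>\<omega>. (delta (2*k1+i) \<omega> * eps (2*k1+i) \<omega>) * (delta (2*k2+i) \<omega> * eps (2*k2+i) \<omega>))
    = (if k1 = k2 then sigma2 * expectation (delta (2*k1+i)) else 0)"
proof -
  have j: "2*k1+i \<ge> 2" and l: "2*k2+i \<ge> 2" using k1 k2 by auto
  have "expectation (\<lambda>\<omega>. (delta (2*k1+i) \<omega> * eps (2*k1+i) \<omega>) * (delta (2*k2+i) \<omega> * eps (2*k2+i) \<omega>))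
      = expectation (\<lambda>\<omega>. delta (2*k1+i) \<omega> * delta (2*k2+i) \<omega>)
        * expectation (\<lambda>\<omega>. eps (2*k1+i) \<omega> * eps (2*k2+i) \<omega>)"
    using observed_noise_moment(2)[OF j l] by (simp add: ac_simps)
  also have "\<dots> = (if k1 = k2 then sigma2 * expectation (delta (2*k1+i)) else 0)"
  proof (cases "k1 = k2")
    case True
    have "(\<lambda>\<omega>. delta (2*k1+i) \<omega> * delta (2*k1+i) \<omega>) = delta (2*k1+i)"
    proof
      fix \<omega> show "delta (2*k1+i) \<omega> * delta (2*k1+i) \<omega> = delta (2*k1+i) \<omega>"
        using delta_01[of "2*k1+i" \<omega>] j by auto
    qed
    then show ?thesis using True eps_second_moment[OF j] by simp
  next
    case False
    then show ?thesis using eps_orthogonal[OF j l] i by simp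
  qed
  finally show ?thesis .
qed

lemma obs_noise_sum_second_moment:
  assumes i: "i \<le> 1"
  shows "integrable M (\<lambda>\<omega>. (obs_noise_sum i n \<omega>)\<^sup>2)"
    "expectation (\<lambda>\<omega>. (obs_noise_sum i n \<omega>)\<^sup>2) = sigma2 * (\<Sum>k\<in>Tn n. expectation (delta (2*k+i)))"
proof -
  have int: "integrable M (\<lambda>\<omega>. (delta (2*k1+i) \<omega> * eps (2*k1+i) \<omega>) * (delta (2*k2+i) \<omega> * eps (2*k2+i) \<omega>))"
    if "k1 \<in> Tn n" "k2 \<in> Tn n" for k1 k2
    using observed_noise_moment(1)[of "2*k1+i" "2*k2+i"] Tn_ge1[OF that(1)] Tn_ge1[OF that(2)]
    by (simp add: ac_simps)
  note square_sum = integral_square_sum[where Z="\<lambda>k \<omega>. delta (2*k+i) \<omega> * eps (2*k+i) \<omega>", OF finite_Tn int]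
  show "integrable M (\<lambda>\<omega>. (obs_noise_sum i n \<omega>)\<^sup>2)"
    unfolding obs_noise_sum_def by (rule square_sum(1))
  have "expectation (\<lambda>\<omega>. (obs_noise_sum i n \<omega>)\<^sup>2)
      = (\<Sum>k1\<in>Tn n. \<Sum>k2\<in>Tn n. expectation (\<lambda>\<omega>. (delta (2*k1+i) \<omega> * eps (2*k1+i) \<omega>)
          * (delta (2*k2+i) \<omega> * eps (2*k2+i) \<omega>)))"
    unfolding obs_noise_sum_def by (rule square_sum(2))
  also have "\<dots> = (\<Sum>k1\<in>Tn n. \<Sum>k2\<in>Tn n. if k1 = k2 then sigma2 * expectation (delta (2*k1+i)) else 0)"
    using observed_noise_cross_moment[OF _ _ i] Tn_ge1 by (intro sum.cong) auto
  finally show "expectation (\<lambda>\<omega>. (obs_noise_sum i n \<omega>)\<^sup>2) = sigma2 * (\<Sum>k\<in>Tn n. expectation (delta (2*k+i)))"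
    by (simp add: sum_distrib_left)
qed

lemma obs_noise_sum_moment_bound:
  assumes i: "i \<le> 1" and pos: "\<And>i j. i \<le> 1 \<Longrightarrow> j \<le> 1 \<Longrightarrow> pmat p i j > 0"
    and pi_gt1: "perron2 (pmat p) > 1"
  obtains K where "\<And>n. expectation (\<lambda>\<omega>. (obs_noise_sum i n \<omega>)\<^sup>2) \<le> K * perron2 (pmat p) ^ n"
proof -
  let ?pi = "perron2 (pmat p)"
  obtain C where C: "\<And>n. (\<Sum>k\<in>Tn n. expectation (delta k)) \<le> C * ?pi ^ n"
    using expected_observed_bound[OF pos pi_gt1] by blast
  have daughters: "(\<Sum>k\<in>Tn n. expectation (delta (2*k+i))) \<le> C * ?pi ^ Suc n" for n
  proof -
    have "(\<Sum>k\<in>Tn n. expectation (delta (2*k+i))) = (\<Sum>j\<in>(\<lambda>k. 2*k+i) ` Tn n. expectation (delta j))"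
      by (subst sum.reindex) (auto simp: inj_on_def)
    also have "\<dots> \<le> (\<Sum>j\<in>Tn (Suc n). expectation (delta j))"
      using daughter_in_Tn_Suc[OF _ i] expectation_delta_nonneg Tn_ge1
      by (intro sum_mono2) auto
    also have "\<dots> \<le> C * ?pi ^ Suc n" by (rule C)
    finally show ?thesis .
  qed
  show ?thesis
  proof (rule that)
    fix n
    have "expectation (\<lambda>\<omega>. (obs_noise_sum i n \<omega>)\<^sup>2) \<le> sigma2 * (C * ?pi ^ Suc n)"
      unfolding obs_noise_sum_second_moment(2)[OF i] using sigma2_nonneg daughters
      by (rule mult_left_mono[rotated])
    then show "expectation (\<lambda>\<omega>. (obs_noise_sum i n \<omega>)\<^sup>2) \<le> (sigma2 * C * ?pi) * ?pi ^ n"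
      by (simp add: ac_simps)
  qed
qed

lemma normalised_obs_noise_sum_moments:
  assumes i: "i \<le> 1" and pos: "\<And>i j. i \<le> 1 \<Longrightarrow> j \<le> 1 \<Longrightarrow> pmat p i j > 0"
    and pi_gt1: "perron2 (pmat p) > 1"
  defines "Z n \<omega> \<equiv> obs_noise_sum i (n - 1) \<omega> / perron2 (pmat p) ^ n"
  shows "Z n \<in> borel_measurable M" "integrable M (\<lambda>\<omega>. (Z n \<omega>)\<^sup>2)"
    "summable (\<lambda>n. expectation (\<lambda>\<omega>. (Z n \<omega>)\<^sup>2))"
proof -
  let ?pi = "perron2 (pmat p)"
  have Z_sq: "(Z n \<omega>)\<^sup>2 = (obs_noise_sum i (n - 1) \<omega>)\<^sup>2 / (?pi ^ n)\<^sup>2" for n \<omega>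
    unfolding Z_def by (simp add: power_divide)
  show "Z n \<in> borel_measurable M"
    unfolding Z_def using obs_noise_sum_measurable by simp
  show "integrable M (\<lambda>\<omega>. (Z n \<omega>)\<^sup>2)"
    unfolding Z_sq using obs_noise_sum_second_moment(1)[OF i] by simp
  obtain K where K: "\<And>m. expectation (\<lambda>\<omega>. (obs_noise_sum i m \<omega>)\<^sup>2) \<le> K * ?pi ^ m"
    using obs_noise_sum_moment_bound[OF i pos pi_gt1] by blast
  have bound: "norm (expectation (\<lambda>\<omega>. (Z n \<omega>)\<^sup>2)) \<le> \<bar>K\<bar> * (1 / ?pi) ^ n" for n
  proof -
    have "norm (expectation (\<lambda>\<omega>. (Z n \<omega>)\<^sup>2)) = expectation (\<lambda>\<omega>. (obs_noise_sum i (n - 1) \<omega>)\<^sup>2) / (?pi ^ n)\<^sup>2"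
      unfolding Z_sq by (simp add: integral_nonneg_AE)
    also have "\<dots> \<le> \<bar>K\<bar> * ?pi ^ n / (?pi ^ n)\<^sup>2"
    proof (rule divide_right_mono)
      have "K * ?pi ^ (n - 1) \<le> \<bar>K\<bar> * ?pi ^ n"
        using pi_gt1 by (intro mult_mono abs_ge_self power_increasing) auto
      then show "expectation (\<lambda>\<omega>. (obs_noise_sum i (n - 1) \<omega>)\<^sup>2) \<le> \<bar>K\<bar> * ?pi ^ n"
        using K[of "n - 1"] by linarith
    qed simp
    also have "\<dots> = \<bar>K\<bar> * (1 / ?pi) ^ n"
      using pi_gt1 by (simp add: power2_eq_square power_one_over field_simps)
    finally show ?thesis .
  qed
  have "summable (\<lambda>n. \<bar>K\<bar> * (1 / ?pi) ^ n)"
    using pi_gt1 by (intro summable_mult summable_geometric) auto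
  then show "summable (\<lambda>n. expectation (\<lambda>\<omega>. (Z n \<omega>)\<^sup>2))"
    using bound by (rule summable_comparison_test')
qed

end

theorem lemma5p4:
  fixes M :: "'a measure"
    and X eps delta :: "nat \<Rightarrow> 'a \<Rightarrow> real"
    and zeta :: "nat \<Rightarrow> 'a \<Rightarrow> bool \<times> bool"
    and p :: "nat \<Rightarrow> (bool \<times> bool) pmf"
    and a b c d sigma2 tau4 kappa8 rho' nu2 lambda4 :: real
    and i :: nat
  assumes prob: "prob_space M"
    \<comment> \<open>BAR process\<close>
    and X1_meas: "X 1 \<in> borel_measurable M"
    and X1_L8: "integrable M (\<lambda>\<omega>. X 1 \<omega> ^ 8)"
    and eps_meas: "\<And>k. k \<ge> 2 \<Longrightarrow> eps k \<in> borel_measurable M"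
    and X_even: "\<And>k \<omega>. k \<ge> 1 \<Longrightarrow> X (2*k) \<omega> = a + b * X k \<omega> + eps (2*k) \<omega>"
    and X_odd: "\<And>k \<omega>. k \<ge> 1 \<Longrightarrow> X (2*k+1) \<omega> = c + d * X k \<omega> + eps (2*k+1) \<omega>"
    and bd_pos: "0 < max \<bar>b\<bar> \<bar>d\<bar>" and bd_lt1: "max \<bar>b\<bar> \<bar>d\<bar> < 1"
    \<comment> \<open>(HN.1)\<close>
    and sigma2_pos: "sigma2 > 0" and tau4_pos: "tau4 > 0" and kappa8_pos: "kappa8 > 0"
    and rho'_bnd: "\<bar>rho'\<bar> < 1"
    and nu2_bnd: "0 \<le> nu2" "nu2 < 1"
    and lambda4_bnd: "0 \<le> lambda4" "lambda4 < 1"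
    and eps_L8: "\<And>n k. k \<in> Gen (Suc n) \<Longrightarrow> integrable M (\<lambda>\<omega>. eps k \<omega> ^ 8)"
    and ce1: "\<And>n k. k \<in> Gen (Suc n) \<Longrightarrow>
       AE \<omega> in M. real_cond_exp M (gen_sigma M X (Tn n)) (eps k) \<omega> = 0"
    and ce2: "\<And>n k. k \<in> Gen (Suc n) \<Longrightarrow>
       AE \<omega> in M. real_cond_exp M (gen_sigma M X (Tn n)) (\<lambda>\<omega>. eps k \<omega> ^ 2) \<omega> = sigma2"
    and ce4: "\<And>n k. k \<in> Gen (Suc n) \<Longrightarrow>
       AE \<omega> in M. real_cond_exp M (gen_sigma M X (Tn n)) (\<lambda>\<omega>. eps k \<omega> ^ 4) \<omega> = tau4"
    and ce8: "\<And>n k. k \<in> Gen (Suc n) \<Longrightarrow>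
       AE \<omega> in M. real_cond_exp M (gen_sigma M X (Tn n)) (\<lambda>\<omega>. eps k \<omega> ^ 8) \<omega> = kappa8"
    and ce_rho: "\<And>n k. k \<in> Gen n \<Longrightarrow>
       AE \<omega> in M. real_cond_exp M (gen_sigma M X (Tn n))
         (\<lambda>\<omega>. eps (2*k) \<omega> * eps (2*k+1) \<omega>) \<omega> = rho' * sigma2"
    and ce_nu: "\<And>n k. k \<in> Gen n \<Longrightarrow>
       AE \<omega> in M. real_cond_exp M (gen_sigma M X (Tn n))
         (\<lambda>\<omega>. eps (2*k) \<omega> ^ 2 * eps (2*k+1) \<omega> ^ 2) \<omega> = nu2 * tau4"
    and ce_lambda: "\<And>n k. k \<in> Gen n \<Longrightarrow>
       AE \<omega> in M. real_cond_exp M (gen_sigma M X (Tn n))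
         (\<lambda>\<omega>. eps (2*k) \<omega> ^ 4 * eps (2*k+1) \<omega> ^ 4) \<omega> = lambda4 * kappa8"
    \<comment> \<open>(HN.2)\<close>
    and HN2: "\<And>n. cond_indep_given M (gen_sigma M X (Tn n)) (Gen n)
       (\<lambda>k \<omega>. (eps (2*k) \<omega>, eps (2*k+1) \<omega>)) (borel :: (real \<times> real) measure)"
    \<comment> \<open>observation process\<close>
    and delta1: "\<And>\<omega>. delta 1 \<omega> = 1"
    and delta_even: "\<And>k \<omega>. k \<ge> 1 \<Longrightarrow> delta (2*k) \<omega> = delta k \<omega> * of_bool (fst (zeta k \<omega>))"
    and delta_odd: "\<And>k \<omega>. k \<ge> 1 \<Longrightarrow> delta (2*k+1) \<omega> = delta k \<omega> * of_bool (snd (zeta k \<omega>))"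
    and zeta_meas: "\<And>k. k \<ge> 1 \<Longrightarrow> zeta k \<in> measurable M (count_space UNIV)"
    and zeta_law: "\<And>k. k \<ge> 1 \<Longrightarrow> distr M (count_space UNIV) (zeta k) = measure_pmf (p (k mod 2))"
    and zeta_indep: "prob_space.indep_vars M (\<lambda>_. count_space UNIV) zeta {1..}"
    \<comment> \<open>(HO)\<close>
    and HO_pos: "\<And>i j. i \<le> 1 \<Longrightarrow> j \<le> 1 \<Longrightarrow> pmat p i j > 0"
    and HO_pi: "perron2 (pmat p) > 1"
    \<comment> \<open>(HI)\<close>
    and HI: "prob_space.indep_set M
       (sets (vimage_algebra (space M) (\<lambda>\<omega> k. (delta k \<omega>, zeta k \<omega>))
          (Pi\<^sub>M UNIV (\<lambda>_. (borel :: real measure) \<Otimes>\<^sub>M count_space (UNIV :: (bool \<times> bool) set)))))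
       (sets (vimage_algebra (space M) (\<lambda>\<omega> k. (X k \<omega>, eps k \<omega>))
          (Pi\<^sub>M UNIV (\<lambda>_. (borel :: real measure) \<Otimes>\<^sub>M (borel :: real measure)))))"
    and i_bnd: "i \<le> 1"
  shows "AE \<omega> in M. (\<lambda>n. (\<Sum>k\<in>Tn (n - 1). delta (2*k+i) \<omega> * eps (2*k+i) \<omega>)
                          / perron2 (pmat p) ^ n) \<longlonglongrightarrow> 0"
proof -
  interpret prob_space M by (rule prob)
  interpret observed_bar_noise M X eps a b c d sigma2 delta zeta p
    by unfold_locales (fact prob X1_meas eps_meas X_even X_odd eps_L8 ce1 ce2 HN2 delta1 delta_even
        delta_odd zeta_meas zeta_law zeta_indep HI)+
  note moments = normalised_obs_noise_sum_moments[OF i_bnd HO_pos HO_pi]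
  have "AE \<omega> in M. (\<lambda>n. obs_noise_sum i (n - 1) \<omega> / perron2 (pmat p) ^ n) \<longlonglongrightarrow> 0"
    by (rule AE_tendsto_zero_if_summable_second_moments[OF moments])
  then show ?thesis
    unfolding obs_noise_sum_def .
qed

end
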